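(* Let $0<q<1$ and $t>0$, let $n\ge 0$ be an integer, and let $u\in\mathbb{C}\setminus\{0\}$. Put $\sinh\xi_n:=\frac{q^{-nt}u-q^{nt}u^{-1}}{2}$. Then $$\left|h_n(\sinh\xi_n\,|\,q)\right|\le \frac{|u|^n}{q^{n^2t}}\,A_q\!\left(-\frac{q^{n(2t-1)}}{|u|^2}\right).$$
   Context: Notation: $(a;q)_0:=1$, $(a;q)_k:=\prod_{j=0}^{k-1}(1-aq^j)$, $(a;q)_\infty:=\prod_{j=0}^{\infty}(1-aq^j)$, and $\left[\begin{array}{c}n\\k\end{array}\right]_q:=\frac{(q;q)_n}{(q;q)_k(q;q)_{n-k}}$. Ramanujan's function is the entire function $A_q(z):=\sum_{k=0}^{\infty}\frac{q^{k^2}}{(q;q)_k}(-z)^k$. The Ismail–Masson ($q^{-1}$-Hermite) polynomial $h_n(x|q)$ is the polynomial of degree $n$ in $x$ determined by $h_n\!\left(\tfrac{v-v^{-1}}{2}\,\middle|\,q\right)=\sum_{k=0}^{n}\left[\begin{array}{c}n\\k\end{array}\right]_q q^{k(k-n)}(-1)^k v^{n-2k}$ for all $v\in\mathbb{C}\setminus\{0\}$ (i.e. $h_n(\sinh\xi|q)=\sum_{k=0}^n \left[\begin{array}{c}n\\k\end{array}\right]_q q^{k(k-n)}(-1)^ke^{(n-2k)\xi}$). In the claim, $h_n(\sinh\xi_n|q)$ means $h_n$ evaluated at $x=\frac{q^{-nt}u-q^{nt}u^{-1}}{2}$. *)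

theory Defs
  imports "HOL-Analysis.Analysis"
begin

definition qpoch :: "'a::comm_ring_1 \<Rightarrow> 'a \<Rightarrow> nat \<Rightarrow> 'a" where
  "qpoch a q k = (\<Prod>j<k. 1 - a * q ^ j)"

definition qbinom :: "real \<Rightarrow> nat \<Rightarrow> nat \<Rightarrow> real" where
  "qbinom q n k = qpoch q q n / (qpoch q q k * qpoch q q (n - k))"

definition ramanujanA :: "real \<Rightarrow> real \<Rightarrow> real" where
  "ramanujanA q z = (\<Sum>k. q ^ (k^2) / qpoch q q k * (- z) ^ k)"

text \<open>The right-hand side of the defining identity of h_n, as a function of v.\<close>
definition hsum :: "real \<Rightarrow> nat \<Rightarrow> complex \<Rightarrow> complex" where
  "hsum q n v = (\<Sum>k\<le>n. complex_of_real (qbinom q n k * q powr (real k * (real k - real n)))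
                    * (-1) ^ k * v powi (int n - 2 * int k))"

text \<open>Ismail--Masson polynomial h_n(x|q): evaluate the defining sum at any v \<noteq> 0 with
  (v - 1/v)/2 = x (such v always exists; the value does not depend on the choice).\<close>
definition ismail_masson_h :: "nat \<Rightarrow> complex \<Rightarrow> real \<Rightarrow> complex" where
  "ismail_masson_h n x q = hsum q n (SOME v. v \<noteq> 0 \<and> (v - inverse v) / 2 = x)"

end

theory Submission
  imports Defs
begin

(* For v \<noteq> 0 the value h_n((v - 1/v)/2 | q) is the Laurent sum hsum q n v: the only
   other solution w of (w - 1/w)/2 = (v - 1/v)/2 is w = -1/v, and k \<mapsto> n - k shows that
   it gives the same sum.  Take v = q^(-nt) u.  The triangle inequality and
   [n k]_q \<le> 1/(q;q)_k bound |h_n| by |v|^n \<Sum>_{k\<le>n} q^(k^2)/(q;q)_k (q^(-n)/|v|^2)^k,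
   a partial sum of the nonnegative series for |v|^n A_q(-q^(-n)/|v|^2); inserting
   |v| = q^(-nt)|u| gives the bound. *)

lemma qpoch_pos:
  fixes q :: real
  assumes "0 \<le> q" "q < 1"
  shows "0 < qpoch q q k"
  unfolding qpoch_def
proof (rule prod_pos)
  fix j
  have "q * q ^ j \<le> q"
    using assms by (simp add: mult_left_le power_le_one)
  then show "0 < 1 - q * q ^ j"
    using assms(2) by simp
qed

lemma qpoch_antimono:
  fixes q :: real
  assumes "0 \<le> q" "q < 1" "m \<le> n"
  shows "qpoch q q n \<le> qpoch q q m"
  using assms(3)
proof (induction n rule: dec_induct)
  case (step n)
  have "qpoch q q (Suc n) = qpoch q q n * (1 - q * q ^ n)"
    by (simp add: qpoch_def)
  also have "\<dots> \<le> qpoch q q n"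
    using qpoch_pos[OF assms(1,2), of n] assms(1) by (simp add: mult_le_cancel_left1)
  finally show ?case using step.IH by simp
qed simp

lemma power_le_qpoch:
  fixes q :: real
  assumes "0 \<le> q" "q \<le> 1"
  shows "(1 - q) ^ k \<le> qpoch q q k"
proof -
  have "(1 - q) ^ k = (\<Prod>j<k. 1 - q)" by simp
  also have "\<dots> \<le> qpoch q q k"
    unfolding qpoch_def
  proof (rule prod_mono)
    fix j
    show "0 \<le> 1 - q \<and> 1 - q \<le> 1 - q * q ^ j"
      using assms mult_left_mono[of "q ^ j" 1 q] power_le_one[of q j] by simp
  qed
  finally show ?thesis .
qed

lemma qbinom_nonneg:
  fixes q :: real
  assumes "0 \<le> q" "q < 1"
  shows "0 \<le> qbinom q n k"
  unfolding qbinom_def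
  using qpoch_pos[OF assms, of n] qpoch_pos[OF assms, of k] qpoch_pos[OF assms, of "n - k"]
  by simp

lemma qbinom_le_inverse_qpoch:
  fixes q :: real
  assumes "0 \<le> q" "q < 1" "k \<le> n"
  shows "qbinom q n k \<le> 1 / qpoch q q k"
proof -
  have pos: "0 < qpoch q q k" "0 < qpoch q q (n - k)"
    using qpoch_pos[OF assms(1,2)] by auto
  have "qbinom q n k \<le> qpoch q q (n - k) / (qpoch q q k * qpoch q q (n - k))"
    unfolding qbinom_def using pos qpoch_antimono[OF assms(1,2), of "n - k" n]
    by (intro divide_right_mono) auto
  also have "\<dots> = 1 / qpoch q q k"
    using pos by simp
  finally show ?thesis .
qed

lemma qbinom_symmetric: "k \<le> n \<Longrightarrow> qbinom q n (n - k) = qbinom q n k"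
  unfolding qbinom_def by (simp add: mult.commute)

lemma summable_ramanujanA:
  fixes q z :: real
  assumes "0 \<le> q" "q < 1"
  shows "summable (\<lambda>k. q ^ (k^2) / qpoch q q k * z ^ k)"
proof (rule summable_comparison_test_ev)
  have "(\<lambda>k. q ^ k * \<bar>z\<bar> / (1 - q))
      \<longlonglongrightarrow> 0 * \<bar>z\<bar> / (1 - q)"
    using assms by (intro tendsto_intros LIMSEQ_power_zero) auto
  then have "eventually (\<lambda>k. q ^ k * \<bar>z\<bar> / (1 - q) < 1 / 2) sequentially"
    by (intro order_tendstoD(2)) auto
  then show "eventually
      (\<lambda>k. norm (q ^ (k^2) / qpoch q q k * z ^ k) \<le> (1 / 2) ^ k) sequentially"
  proof eventually_elim
    case (elim k)
    have "norm (q ^ (k^2) / qpoch q q k * z ^ k) = (q ^ k * \<bar>z\<bar>) ^ k / qpoch q q k"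
      using qpoch_pos[OF assms, of k] assms
      by (simp add: abs_mult power_abs power_mult_distrib power2_eq_square power_mult)
    also have "\<dots> \<le> (q ^ k * \<bar>z\<bar>) ^ k / (1 - q) ^ k"
      using assms power_le_qpoch[of q k] qpoch_pos[OF assms, of k]
      by (intro divide_left_mono mult_pos_pos) auto
    also have "\<dots> = (q ^ k * \<bar>z\<bar> / (1 - q)) ^ k"
      by (simp add: power_divide)
    also have "\<dots> \<le> (1 / 2) ^ k"
      using elim assms by (intro power_mono) auto
    finally show ?case .
  qed
qed simp

lemma hsum_minus_inverse: "hsum q n (- inverse v) = hsum q n v"
proof -
  define c where "c k = complex_of_real (qbinom q n k * q powr (real k * (real k - real n)))" for k
  have term_reflect: "c (n - k) * (-1) ^ (n - k) * (- inverse v) powi (int n - 2 * int (n - k))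
      = c k * (-1) ^ k * v powi (int n - 2 * int k)" if "k \<le> n" for k
  proof -
    obtain m where n: "n = k + m"
      using \<open>k \<le> n\<close> le_Suc_ex by blast
    have "c (n - k) = c k"
      unfolding c_def qbinom_symmetric[OF \<open>k \<le> n\<close>] using n
      by (simp add: algebra_simps)
    moreover have
      "(-1) ^ m * (- inverse v) powi (int k - int m) = (-1) ^ k * v powi (int m - int k)"
    proof -
      have "(- inverse v) powi (int k - int m)
          = (-1) powi (int k - int m) * (inverse v) powi (int k - int m)"
        by (rule power_int_minus_left_distrib) simp
      also have "(inverse v) powi (int k - int m) = v powi (int m - int k)"
        by (metis minus_diff_eq power_int_inverse power_int_minus)
      finally have "(- inverse v) powi (int k - int m)
          = (-1) powi (int k - int m) * v powi (int m - int k)" .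
      moreover have "(-1) ^ m * (-1) powi (int k - int m) = ((-1) ^ k :: complex)"
        using power_int_add[of "-1 :: complex" "int m" "int k - int m"] by simp
      ultimately show ?thesis
        by (simp add: mult.assoc [symmetric])
    qed
    ultimately show ?thesis
      using n by simp
  qed
  have "hsum q n (- inverse v)
      = (\<Sum>k\<le>n. c (n - k) * (-1) ^ (n - k) * (- inverse v) powi (int n - 2 * int (n - k)))"
    unfolding hsum_def c_def
    by (rule sum.reindex_bij_witness[of _ "\<lambda>k. n - k" "\<lambda>k. n - k"]) auto
  also have "\<dots> = hsum q n v"
    unfolding hsum_def c_def[symmetric] by (rule sum.cong[OF refl], rule term_reflect) simp
  finally show ?thesis .
qed

lemma diff_inverse_eq_diff_inverse_iff:
  fixes v w :: "'a :: field"
  assumes "v \<noteq> 0" "w \<noteq> 0"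
  shows "w - inverse w = v - inverse v \<longleftrightarrow> w = v \<or> w = - inverse v"
proof
  assume eq: "w - inverse w = v - inverse v"
  have "(w - v) * (w * v + 1) = w * v * ((w - inverse w) - (v - inverse v))"
    using assms by (simp add: field_simps)
  then have "w - v = 0 \<or> w * v + 1 = 0"
    by (simp only: eq diff_self mult_zero_right mult_eq_0_iff)
  then show "w = v \<or> w = - inverse v"
    using assms by (auto simp: field_simps add_eq_0_iff)
next
  assume "w = v \<or> w = - inverse v"
  then show "w - inverse w = v - inverse v"
    using assms by auto
qed

lemma ismail_masson_h_eq_hsum:
  assumes "v \<noteq> 0"
  shows "ismail_masson_h n ((v - inverse v) / 2) q = hsum q n v"
proof -
  define w where "w = (SOME w. w \<noteq> 0 \<and> (w - inverse w) / 2 = (v - inverse v) / 2)"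
  have w: "w \<noteq> 0 \<and> (w - inverse w) / 2 = (v - inverse v) / 2"
    unfolding w_def by (rule someI[of _ v]) (use assms in simp)
  then have "w - inverse w = v - inverse v"
    by (metis divide_cancel_right zero_neq_numeral)
  then have "w = v \<or> w = - inverse v"
    using diff_inverse_eq_diff_inverse_iff assms w by blast
  then show ?thesis
    unfolding ismail_masson_h_def w_def[symmetric] using hsum_minus_inverse by auto
qed

lemma powr_powi_eq_ramanujan_term:
  fixes q r :: real
  assumes "0 < q" "0 < r"
  shows "q powr (real k * (real k - real n)) * r powi (int n - 2 * int k)
       = r ^ n * (q ^ (k^2) * (q powr (- real n) / r^2) ^ k)"
proof -
  have "q ^ (k^2) * (q powr (- real n)) ^ k = q powr (real k * (real k - real n))"
    using assms by (simp add: powr_realpow[symmetric] powr_powr powr_add[symmetric]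
        power2_eq_square algebra_simps)
  moreover have "r powi (int n - 2 * int k) * (r^2) ^ k = r ^ n"
    using assms by (simp add: power_int_diff power_mult[symmetric] power_int_mult)
  ultimately show ?thesis
    using assms by (simp add: field_simps)
qed

lemma norm_hsum_le_ramanujanA:
  fixes q :: real
  assumes q: "0 < q" "q < 1" and "v \<noteq> 0"
  shows "norm (hsum q n v) \<le> norm v ^ n * ramanujanA q (- (q powr (- real n) / (norm v)^2))"
proof -
  have q': "0 \<le> q" "q < 1"
    using q by simp_all
  define r where "r = norm v"
  define z where "z = q powr (- real n) / r^2"
  define a where "a k = q ^ (k^2) / qpoch q q k * z ^ k" for k
  have "0 < r" "0 \<le> z"
    using \<open>v \<noteq> 0\<close> by (simp_all add: r_def z_def)
  have a_nonneg: "0 \<le> a k" for k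
    unfolding a_def using qpoch_pos[OF q', of k] q \<open>0 \<le> z\<close> by simp
  have "norm (hsum q n v)
      \<le> (\<Sum>k\<le>n. qbinom q n k * q powr (real k * (real k - real n))
              * r powi (int n - 2 * int k))"
    unfolding hsum_def r_def
    by (rule order_trans[OF norm_sum], rule sum_mono)
      (simp add: norm_mult norm_power norm_power_int qbinom_nonneg[OF q'])
  also have "\<dots> \<le> (\<Sum>k\<le>n. r ^ n * a k)"
  proof (rule sum_mono)
    fix k assume "k \<in> {..n}"
    then have "qbinom q n k \<le> 1 / qpoch q q k"
      using qbinom_le_inverse_qpoch[OF q'] by simp
    then have "qbinom q n k * (r ^ n * (q ^ (k^2) * z ^ k))
        \<le> 1 / qpoch q q k * (r ^ n * (q ^ (k^2) * z ^ k))"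
      using \<open>0 < r\<close> \<open>0 \<le> z\<close> q by (intro mult_right_mono) auto
    then show "qbinom q n k * q powr (real k * (real k - real n)) * r powi (int n - 2 * int k)
        \<le> r ^ n * a k"
      using powr_powi_eq_ramanujan_term[OF q(1) \<open>0 < r\<close>, of k n]
      by (simp add: a_def z_def mult.assoc)
  qed
  also have "\<dots> = r ^ n * (\<Sum>k\<le>n. a k)"
    by (simp add: sum_distrib_left)
  also have "\<dots> \<le> r ^ n * (\<Sum>k. a k)"
    using sum_le_suminf[OF summable_ramanujanA[OF q', of z], of "{..n}"] a_nonneg
      \<open>0 < r\<close>
    by (intro mult_left_mono) (simp_all add: a_def)
  also have "\<dots> = norm v ^ n * ramanujanA q (- (q powr (- real n) / (norm v)^2))"
    by (simp add: ramanujanA_def a_def z_def r_def)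
  finally show ?thesis .
qed

theorem mainTheorem1:
  fixes q t :: real and n :: nat and u :: complex
  assumes "0 < q" "q < 1" "0 < t" "u \<noteq> 0"
  shows "cmod (ismail_masson_h n
            ((complex_of_real (q powr (- real n * t)) * u
              - complex_of_real (q powr (real n * t)) * inverse u) / 2) q)
         \<le> cmod u ^ n / q powr ((real n)^2 * t)
            * ramanujanA q (- (q powr (real n * (2 * t - 1)) / (cmod u)^2))"
proof -
  define v where "v = complex_of_real (q powr (- real n * t)) * u"
  have "v \<noteq> 0"
    using assms by (simp add: v_def)
  have argument: "(complex_of_real (q powr (- real n * t)) * u
      - complex_of_real (q powr (real n * t)) * inverse u) / 2 = (v - inverse v) / 2"
    using assms by (simp add: v_def powr_minus flip: of_real_inverse)
  have norm_v: "norm v = q powr (- real n * t) * cmod u"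
    using assms by (simp add: v_def norm_mult)
  have "cmod (ismail_masson_h n ((v - inverse v) / 2) q) = norm (hsum q n v)"
    by (simp add: ismail_masson_h_eq_hsum[OF \<open>v \<noteq> 0\<close>])
  also have "\<dots> \<le> norm v ^ n * ramanujanA q (- (q powr (- real n) / (norm v)^2))"
    by (rule norm_hsum_le_ramanujanA[OF assms(1,2) \<open>v \<noteq> 0\<close>])
  also have "norm v ^ n = cmod u ^ n / q powr ((real n)^2 * t)"
    using assms by (simp add: norm_v powr_power powr_minus power2_eq_square field_simps)
  also have "q powr (- real n) / (norm v)^2 = q powr (real n * (2 * t - 1)) / (cmod u)^2"
    using assms by (simp add: norm_v powr_power powr_diff powr_minus powr_add field_simps)
  finally show ?thesis
    unfolding argument .
qed

end
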